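(* Let $p$ be an odd prime and let $\alpha_0\in\mathbb{Q}_p$ have an infinite Browkin $p$-adic continued fraction expansion $[b_0,b_1,b_2,\ldots]$. Define $A_{-2}=0$, $A_{-1}=1$, $A_i=b_iA_{i-1}+A_{i-2}$ and $B_{-2}=1$, $B_{-1}=0$, $B_i=b_iB_{i-1}+B_{i-2}$ for $i\ge 0$. Then $\lvert A_n\rvert_\infty<\lvert A_n\rvert_p$ and $\lvert B_n\rvert_\infty<\lvert B_n\rvert_p$ for all sufficiently large $n$.
   Context: $\lvert\cdot\rvert_p$ denotes the $p$-adic absolute value and $\lvert\cdot\rvert_\infty$ the usual archimedean absolute value on $\mathbb{Q}$. Every $x\in\mathbb{Q}_p$ has a unique expansion $x=\sum_{i\ge r}a_ip^i$ with $r\in\mathbb{Z}$ and $a_i\in\{-\frac{p-1}{2},\ldots,\frac{p-1}{2}\}$; Browkin's function is $s(x)=\sum_{i=r}^{0}a_ip^i$ (so $s(x)=0$ if $r>0$). The Browkin continued fraction expansion $[b_0,b_1,\ldots]$ of $\alpha_0$ is obtained by iterating $b_i=s(\alpha_i)$ and $\alpha_{i+1}=1/(\alpha_i-b_i)$ as long as $\alpha_i\neq b_i$ (if $\alpha_i=b_i$ the expansion stops). *)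

theory Defs
  imports Complex_Main "HOL-Computational_Algebra.Primes"
begin

definition padic_val :: "nat \<Rightarrow> rat \<Rightarrow> int" where
  "padic_val p q =
     int (multiplicity (int p) (fst (quotient_of q)))
   - int (multiplicity (int p) (snd (quotient_of q)))"

definition padic_abs :: "nat \<Rightarrow> rat \<Rightarrow> real" where
  "padic_abs p q = (if q = 0 then 0 else real p powi (- padic_val p q))"

text \<open>Q_p is modelled as the completion of Q: an element of Q_p is represented by a
  p-adic Cauchy sequence of rationals; two representatives denote the same p-adic
  number iff their difference tends to 0 p-adically.\<close>

definition padic_cauchy :: "nat \<Rightarrow> (nat \<Rightarrow> rat) \<Rightarrow> bool" where
  "padic_cauchy p X \<longleftrightarrow>
     (\<forall>e>0. \<exists>N. \<forall>m\<ge>N. \<forall>n\<ge>N. padic_abs p (X m - X n) < e)"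

definition padic_eq :: "nat \<Rightarrow> (nat \<Rightarrow> rat) \<Rightarrow> (nat \<Rightarrow> rat) \<Rightarrow> bool" where
  "padic_eq p X Y \<longleftrightarrow> (\<lambda>n. padic_abs p (X n - Y n)) \<longlonglongrightarrow> 0"

text \<open>Browkin's function s: if x = sum_{i>=r} a_i p^i with balanced digits
  a_i in {-(p-1)/2, ..., (p-1)/2} (the series converging p-adically to x), then
  s(x) = sum_{i=r}^{0} a_i p^i (an empty sum, i.e. 0, if r > 0).\<close>

definition browkin_s :: "nat \<Rightarrow> (nat \<Rightarrow> rat) \<Rightarrow> rat" where
  "browkin_s p X = (THE c. \<exists>(a::int \<Rightarrow> int) (r::int).
      (\<forall>i. \<bar>a i\<bar> \<le> (int p - 1) div 2) \<and> (\<forall>i<r. a i = 0) \<and>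
      padic_eq p X (\<lambda>n. \<Sum>i\<in>{r..int n}. of_int (a i) * (of_nat p) powi i) \<and>
      c = (\<Sum>i\<in>{r..0}. of_int (a i) * (of_nat p) powi i))"

text \<open>Complete quotients alpha_i (as representatives): alpha_0 = X,
  alpha_{i+1} = 1/(alpha_i - b_i) with b_i = s(alpha_i).  (Pointwise inversion of a
  representative of a nonzero p-adic number represents its inverse.)\<close>

fun browkin_alpha :: "nat \<Rightarrow> (nat \<Rightarrow> rat) \<Rightarrow> nat \<Rightarrow> (nat \<Rightarrow> rat)" where
  "browkin_alpha p X 0 = X"
| "browkin_alpha p X (Suc i) =
     (\<lambda>n. inverse (browkin_alpha p X i n - browkin_s p (browkin_alpha p X i)))"

definition browkin_b :: "nat \<Rightarrow> (nat \<Rightarrow> rat) \<Rightarrow> nat \<Rightarrow> rat" where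
  "browkin_b p X i = browkin_s p (browkin_alpha p X i)"

definition browkin_infinite :: "nat \<Rightarrow> (nat \<Rightarrow> rat) \<Rightarrow> bool" where
  "browkin_infinite p X \<longleftrightarrow>
     (\<forall>i. \<not> padic_eq p (browkin_alpha p X i) (\<lambda>_. browkin_b p X i))"

text \<open>Shifted convergent numerators/denominators:
  cfA b k = A_{k-2}, cfB b k = B_{k-2}.\<close>

fun cfA :: "(nat \<Rightarrow> rat) \<Rightarrow> nat \<Rightarrow> rat" where
  "cfA b 0 = 0"
| "cfA b (Suc 0) = 1"
| "cfA b (Suc (Suc n)) = b n * cfA b (Suc n) + cfA b n"

fun cfB :: "(nat \<Rightarrow> rat) \<Rightarrow> nat \<Rightarrow> rat" where
  "cfB b 0 = 1"
| "cfB b (Suc 0) = 0"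
| "cfB b (Suc (Suc n)) = b n * cfB b (Suc n) + cfB b n"

end

(* Every partial quotient b_i with i >= 1 satisfies |b_i|_p >= p: alpha_{i-1} and
   b_{i-1} = s(alpha_{i-1}) agree up to p-adic error 1/p, so the complete quotient
   alpha_i = 1/(alpha_{i-1} - b_{i-1}) has |alpha_i|_p >= p, and s(alpha_i) inherits this
   absolute value for the same reason.  For x = A or x = B, once |x_k|_p < |x_{k+1}|_p the
   ultrametric inequality turns x_{k+2} = b_k x_{k+1} + x_k into
   |x_{k+2}|_p = |b_k|_p |x_{k+1}|_p, so the p-adic sizes grow by a factor of at least p per
   step.  Archimedeanly the balanced digits give |b_k| < p/2, hence
   |x_{k+2}| <= (p/2) |x_{k+1}| + |x_k|, and for p >= 3 the ratio r_k = |x_k| / |x_k|_p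
   satisfies r_{k+2} <= r_{k+1}/2 + r_k/9, so it tends to 0.

   As Q_p is modelled by Cauchy sequences, s is a definite description.  It denotes because
   every Cauchy sequence has a balanced digit expansion, and uniquely so because a number in
   Z[1/p] with archimedean size < p and p-adic size < 1 is 0. *)

theory Submission
  imports Defs
begin

section \<open>The \<open>p\<close>-adic absolute value on the rationals\<close>

lemma power_int_le_power_int_iff:
  fixes a :: real
  assumes "a > 1"
  shows "a powi m \<le> a powi n \<longleftrightarrow> m \<le> n"
  using power_int_strict_increasing[of n m a] power_int_increasing[of m n a] assms by force

lemma power_int_less_power_int_iff:
  fixes a :: real
  assumes "a > 1"
  shows "a powi m < a powi n \<longleftrightarrow> m < n"
  using power_int_le_power_int_iff[OF assms, of n m] by linarith

lemma padic_abs_0 [simp]: "padic_abs p 0 = 0"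
  by (simp add: padic_abs_def)

lemma padic_abs_1 [simp]: "padic_abs p 1 = 1"
  by (simp add: padic_abs_def padic_val_def)

lemma rat_cases_int_fraction:
  fixes x :: rat
  obtains a b :: int where "b > 0" "x = of_int a / of_int b"
  by (cases x rule: Rat_cases) (auto simp: Fract_of_int_quotient)

locale padic =
  fixes p :: nat
  assumes prime_p: "prime p"
begin

lemma p_gt_1: "p > 1"
  using prime_p prime_gt_1_nat by blast

lemma real_p_gt_1: "real p > 1"
  using p_gt_1 by simp

lemma prime_elem_p: "prime_elem (int p)"
  using prime_p by simp

lemma padic_val_of_int_divide:
  fixes a b :: int
  assumes a: "a \<noteq> 0" and b: "b \<noteq> 0"
  shows "padic_val p (of_int a / of_int b) =
         int (multiplicity (int p) a) - int (multiplicity (int p) b)"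
proof -
  obtain n d where q: "quotient_of (of_int a / of_int b) = (n, d)"
    by (cases "quotient_of (of_int a / of_int b)")
  have d: "d > 0" using quotient_of_denom_pos[OF q] .
  have eq: "(of_int a / of_int b :: rat) = of_int n / of_int d" using quotient_of_div[OF q] .
  have n: "n \<noteq> 0" using eq a b d by auto
  have "of_int (a * d) = (of_int (n * b) :: rat)" using eq b d by (simp add: field_simps)
  hence "multiplicity (int p) (a * d) = multiplicity (int p) (n * b)" by (simp only: of_int_eq_iff)
  hence "multiplicity (int p) a + multiplicity (int p) d = multiplicity (int p) n + multiplicity (int p) b"
    using a b n d by (simp add: prime_elem_multiplicity_mult_distrib[OF prime_elem_p])
  thus ?thesis unfolding padic_val_def q by simp
qed

lemma padic_val_of_int:
  "a \<noteq> 0 \<Longrightarrow> padic_val p (of_int a) = int (multiplicity (int p) a)"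
  using padic_val_of_int_divide[of a 1] by simp

lemma padic_val_mult:
  assumes "x \<noteq> 0" "y \<noteq> 0"
  shows "padic_val p (x * y) = padic_val p x + padic_val p y"
proof -
  obtain a b where ab: "b > 0" "x = of_int a / of_int b" by (rule rat_cases_int_fraction)
  obtain c d where cd: "d > 0" "y = of_int c / of_int d" by (rule rat_cases_int_fraction)
  have "a \<noteq> 0" "c \<noteq> 0" using assms ab cd by auto
  moreover have "x * y = of_int (a * c) / of_int (b * d)" using ab cd by simp
  ultimately show ?thesis
    using ab cd padic_val_of_int_divide[of a b] padic_val_of_int_divide[of c d]
      padic_val_of_int_divide[of "a * c" "b * d"]
    by (simp add: prime_elem_multiplicity_mult_distrib[OF prime_elem_p])
qed

lemma padic_val_inverse: "x \<noteq> 0 \<Longrightarrow> padic_val p (inverse x) = - padic_val p x"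
  using padic_val_mult[of x "inverse x"] by (simp add: padic_val_def)

lemma padic_val_uminus: "padic_val p (- x) = padic_val p x"
proof -
  obtain n d where q: "quotient_of x = (n, d)" by (cases "quotient_of x")
  hence "quotient_of (- x) = (- n, d)" by (simp add: rat_uminus_code)
  thus ?thesis using q multiplicity_normalize_right[of "int p" "- n"] multiplicity_normalize_right[of "int p" n]
    unfolding padic_val_def by simp
qed

lemma padic_val_add:
  assumes x: "x \<noteq> 0" and y: "y \<noteq> 0" and xy: "x + y \<noteq> 0"
  shows "padic_val p (x + y) \<ge> min (padic_val p x) (padic_val p y)"
    and "padic_val p x < padic_val p y \<Longrightarrow> padic_val p (x + y) = padic_val p x"
proof -
  obtain a b where ab: "b > 0" "x = of_int a / of_int b" by (rule rat_cases_int_fraction)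
  obtain c d where cd: "d > 0" "y = of_int c / of_int d" by (rule rat_cases_int_fraction)
  define m where "m = multiplicity (int p)"
  have e: "x = of_int (a * d) / of_int (b * d)" "y = of_int (c * b) / of_int (b * d)"
    "x + y = of_int (a * d + c * b) / of_int (b * d)"
    using ab cd by (simp_all add: field_simps)
  have nz: "a * d \<noteq> 0" "c * b \<noteq> 0" "b * d \<noteq> 0" "a * d + c * b \<noteq> 0"
    using ab cd x y xy e(3) by (auto simp del: of_int_add of_int_mult)
  have v: "padic_val p x = int (m (a * d)) - int (m (b * d))"
    "padic_val p y = int (m (c * b)) - int (m (b * d))"
    "padic_val p (x + y) = int (m (a * d + c * b)) - int (m (b * d))"
    unfolding m_def
    by (subst e(1), rule padic_val_of_int_divide[OF nz(1,3)])
      (subst e(2), rule padic_val_of_int_divide[OF nz(2,3)],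
       subst e(3), rule padic_val_of_int_divide[OF nz(4,3)])
  have "int p ^ min (m (a * d)) (m (c * b)) dvd a * d + c * b"
    unfolding m_def by (intro dvd_add multiplicity_dvd') auto
  hence "min (m (a * d)) (m (c * b)) \<le> m (a * d + c * b)"
    unfolding m_def using multiplicity_geI[OF nz(4)] p_gt_1 by simp
  thus "padic_val p (x + y) \<ge> min (padic_val p x) (padic_val p y)"
    using v by auto
  assume "padic_val p x < padic_val p y"
  hence "m (a * d) < m (c * b)" using v by simp
  hence "m (a * d + c * b) = m (a * d)"
    using multiplicity_sum_lt nz(1,2) unfolding m_def by blast
  thus "padic_val p (x + y) = padic_val p x" using v by simp
qed

lemma padic_abs_nonneg: "padic_abs p x \<ge> 0"
  by (simp add: padic_abs_def)

lemma padic_abs_pos: "x \<noteq> 0 \<Longrightarrow> padic_abs p x > 0"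
  using real_p_gt_1 by (simp add: padic_abs_def)

lemma padic_abs_mult: "padic_abs p (x * y) = padic_abs p x * padic_abs p y"
  using real_p_gt_1
  by (cases "x = 0 \<or> y = 0") (auto simp: padic_abs_def padic_val_mult power_int_diff power_int_minus field_simps)

lemma padic_abs_inverse: "padic_abs p (inverse x) = inverse (padic_abs p x)"
  by (cases "x = 0") (simp_all add: padic_abs_def padic_val_inverse power_int_minus)

lemma padic_abs_uminus [simp]: "padic_abs p (- x) = padic_abs p x"
  by (simp add: padic_abs_def padic_val_uminus)

lemma padic_abs_minus_commute: "padic_abs p (x - y) = padic_abs p (y - x)"
  using padic_abs_uminus[of "x - y"] by simp

lemma padic_abs_add_le: "padic_abs p (x + y) \<le> max (padic_abs p x) (padic_abs p y)"
proof (cases "x = 0 \<or> y = 0 \<or> x + y = 0")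
  case True thus ?thesis using padic_abs_nonneg[of x] padic_abs_nonneg[of y] by auto
next
  case False
  hence "padic_val p (x + y) \<ge> min (padic_val p x) (padic_val p y)"
    using padic_val_add(1) by blast
  thus ?thesis using False
    by (auto simp: padic_abs_def max_def power_int_le_power_int_iff[OF real_p_gt_1])
qed

lemma padic_abs_add_eq:
  assumes "padic_abs p y < padic_abs p x"
  shows "padic_abs p (x + y) = padic_abs p x"
proof (cases "y = 0")
  case False
  have x: "x \<noteq> 0" using assms padic_abs_nonneg[of y] by auto
  have "x + y \<noteq> 0"
  proof
    assume "x + y = 0"
    hence "y = - x" by (simp add: add_eq_0_iff)
    thus False using assms by simp
  qed
  moreover have "padic_val p x < padic_val p y"
    using assms x False by (simp add: padic_abs_def power_int_less_power_int_iff[OF real_p_gt_1])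
  ultimately show ?thesis using padic_val_add(2) x False by (simp add: padic_abs_def)
qed simp

lemma padic_abs_diff_trans_le:
  "padic_abs p (x - y) \<le> c \<Longrightarrow> padic_abs p (y - z) \<le> c \<Longrightarrow> padic_abs p (x - z) \<le> c"
  using padic_abs_add_le[of "x - y" "y - z"] by simp

lemma padic_abs_sum_le:
  assumes "\<And>i. i \<in> A \<Longrightarrow> padic_abs p (f i) \<le> c" "c \<ge> 0"
  shows "padic_abs p (sum f A) \<le> c"
  using assms
proof (induction A rule: infinite_finite_induct)
  case (insert a A)
  thus ?case using order_trans[OF padic_abs_add_le[of "f a" "sum f A"]] by simp
qed simp_all

lemma padic_abs_of_int_le_1: "padic_abs p (of_int m) \<le> 1"
  using power_int_le_power_int_iff[OF real_p_gt_1, of "- int (multiplicity (int p) m)" 0]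
  by (cases "m = 0") (simp_all add: padic_abs_def padic_val_of_int)

lemma padic_val_p_power_int: "padic_val p (of_nat p powi k) = k"
proof -
  have "padic_val p (of_nat p ^ n) = int n" for n
    using padic_val_of_int[of "int p ^ n"] p_gt_1 prime_elem_p by simp
  thus ?thesis
    using padic_val_inverse[of "of_nat p ^ nat (- k)"] p_gt_1
    by (cases "k \<ge> 0") (simp_all add: power_int_def power_inverse)
qed

lemma padic_abs_p_power_int: "padic_abs p (of_nat p powi k) = real p powi (- k)"
  using p_gt_1 by (simp add: padic_abs_def padic_val_p_power_int power_int_not_zero)

lemma padic_abs_p_power: "padic_abs p (of_nat p ^ k) = real p powi (- int k)"
  using padic_abs_p_power_int[of "int k"] by simp

lemma padic_abs_divide_p: "padic_abs p (x / of_nat p) = real p * padic_abs p x"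
  using padic_abs_p_power[of 1] p_gt_1
  by (simp add: divide_inverse padic_abs_mult padic_abs_inverse power_int_minus)

lemma padic_abs_le_p_power_int_iff:
  "x \<noteq> 0 \<Longrightarrow> padic_abs p x \<le> real p powi (- k) \<longleftrightarrow> padic_val p x \<ge> k"
  by (simp add: padic_abs_def power_int_le_power_int_iff[OF real_p_gt_1])

lemma padic_abs_less_p_power_int_iff:
  "x \<noteq> 0 \<Longrightarrow> padic_abs p x < real p powi (- k) \<longleftrightarrow> padic_val p x > k"
  by (simp add: padic_abs_def power_int_less_power_int_iff[OF real_p_gt_1])

lemma padic_abs_of_int_le_p_power_iff:
  "padic_abs p (of_int m) \<le> real p powi (- int k) \<longleftrightarrow> int p ^ k dvd m"
proof (cases "m = 0")
  case False
  thus ?thesis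
    using padic_abs_le_p_power_int_iff[of "of_int m" "int k"] padic_val_of_int
      power_dvd_iff_le_multiplicity[of m "int p" k] p_gt_1 by simp
qed simp

lemma padic_abs_of_int_eq_1_iff: "padic_abs p (of_int m) = 1 \<longleftrightarrow> \<not> int p dvd m"
proof (cases "m = 0")
  case False
  have "real p ^ k = 1 \<longleftrightarrow> k = 0" for k
    using one_less_power[OF real_p_gt_1, of k] by (cases k) auto
  thus ?thesis
    using False multiplicity_eq_zero_iff[of m "int p"] p_gt_1
    by (simp add: padic_abs_def padic_val_of_int power_int_minus)
qed simp

lemma padic_integer_cases:
  assumes "padic_abs p x \<le> 1"
  obtains a b :: int where "\<not> int p dvd b" "x = of_int a / of_int b"
proof -
  obtain a b where q: "quotient_of x = (a, b)" by (cases "quotient_of x")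
  have x: "x = of_int a / of_int b" and b: "b > 0" and cop: "coprime a b"
    using quotient_of_div[OF q] quotient_of_denom_pos[OF q] quotient_of_coprime[OF q] by auto
  have "\<not> int p dvd b"
  proof
    assume pb: "int p dvd b"
    show False
    proof (cases "a = 0")
      case True
      thus False using pb cop p_gt_1 by (auto simp: abs_if split: if_splits)
    next
      case False
      have "padic_val p x \<ge> 0"
        using assms False x b padic_abs_le_p_power_int_iff[of x 0] by simp
      hence "multiplicity (int p) a \<ge> multiplicity (int p) b"
        using padic_val_of_int_divide[OF False] b x by simp
      moreover have "multiplicity (int p) b > 0"
        using pb b p_gt_1 by (simp add: multiplicity_gt_zero_iff)
      ultimately have "int p dvd a"
        using multiplicity_gt_zero_iff[of a "int p"] False p_gt_1 by simp
      thus False using coprime_common_divisor[OF cop _ pb] p_gt_1 by simp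
    qed
  qed
  thus thesis using that x by blast
qed

end

section \<open>\<open>p\<close>-adic Cauchy sequences\<close>

context padic
begin

lemma padic_cauchy_affine:
  assumes "padic_cauchy p Y"
  shows "padic_cauchy p (\<lambda>n. c * Y n + d)"
proof (cases "c = 0")
  case False
  show ?thesis
    unfolding padic_cauchy_def
  proof (intro allI impI)
    fix \<epsilon> :: real
    assume "\<epsilon> > 0"
    hence "\<epsilon> / padic_abs p c > 0" using False padic_abs_pos by simp
    then obtain N where "\<forall>m\<ge>N. \<forall>n\<ge>N. padic_abs p (Y m - Y n) < \<epsilon> / padic_abs p c"
      using assms unfolding padic_cauchy_def by blast
    moreover have "padic_abs p (c * Y m + d - (c * Y n + d)) = padic_abs p c * padic_abs p (Y m - Y n)"
      for m n
      by (simp flip: padic_abs_mult add: algebra_simps)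
    ultimately show "\<exists>N. \<forall>m\<ge>N. \<forall>n\<ge>N. padic_abs p (c * Y m + d - (c * Y n + d)) < \<epsilon>"
      using False padic_abs_pos[of c] by (auto simp: pos_less_divide_eq mult.commute)
  qed
qed (simp add: padic_cauchy_def)

lemma padic_cauchy_eventually_bounded:
  assumes "padic_cauchy p Y"
  obtains R where "\<forall>\<^sub>F n in sequentially. padic_abs p (Y n) \<le> real p ^ R"
proof -
  obtain N where N: "\<forall>m\<ge>N. \<forall>n\<ge>N. padic_abs p (Y m - Y n) < 1"
    using assms unfolding padic_cauchy_def by (meson zero_less_one)
  obtain R where R: "padic_abs p (Y N) < real p ^ R"
    using real_arch_pow[OF real_p_gt_1] by blast
  have "padic_abs p (Y n) \<le> real p ^ R" if "n \<ge> N" for n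
  proof -
    have "padic_abs p (Y n) \<le> max (padic_abs p (Y n - Y N)) (padic_abs p (Y N))"
      using padic_abs_add_le[of "Y n - Y N" "Y N"] by simp
    moreover have "padic_abs p (Y n - Y N) < 1" using N that by blast
    moreover have "1 \<le> real p ^ R" using real_p_gt_1 by simp
    ultimately show ?thesis using R by linarith
  qed
  thus thesis using that by (auto simp: eventually_sequentially)
qed

lemma tendsto_0_if_eventually_le_p_powers:
  assumes "\<And>K. \<forall>\<^sub>F n in sequentially. f n \<le> real p powi - int K" "\<And>n. f n \<ge> 0"
  shows "f \<longlonglongrightarrow> 0"
proof (rule order_tendstoI)
  fix a :: real
  assume "a < 0"
  hence "a < f n" for n using assms(2)[of n] by linarith
  thus "\<forall>\<^sub>F n in sequentially. a < f n" by simp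
next
  fix a :: real
  assume "a > 0"
  moreover have "inverse (real p) < 1" using real_p_gt_1 by (simp add: inverse_less_1_iff)
  ultimately obtain K where "inverse (real p) ^ K < a"
    using real_arch_pow_inv by blast
  hence "real p powi - int K < a" by (simp add: power_int_minus power_inverse)
  thus "\<forall>\<^sub>F n in sequentially. f n < a"
    using assms(1)[of K] by (auto elim!: eventually_mono)
qed

lemma padic_cauchy_not_null_eventually_const:
  assumes "padic_cauchy p Y" "\<not> (\<lambda>n. padic_abs p (Y n)) \<longlonglongrightarrow> 0"
  obtains C where "C > 0" "\<forall>\<^sub>F n in sequentially. padic_abs p (Y n) = C"
proof -
  have "\<exists>\<epsilon>>0. \<forall>N. \<exists>n\<ge>N. \<epsilon> \<le> padic_abs p (Y n)"
  proof (rule ccontr)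
    assume "\<not> ?thesis"
    hence "\<forall>\<epsilon>>0. \<exists>N. \<forall>n\<ge>N. padic_abs p (Y n) < \<epsilon>" by (meson not_le)
    hence "(\<lambda>n. padic_abs p (Y n)) \<longlonglongrightarrow> 0"
      by (intro LIMSEQ_I) (simp add: padic_abs_nonneg)
    with assms(2) show False ..
  qed
  then obtain \<epsilon> where \<epsilon>: "\<epsilon> > 0" "\<forall>N. \<exists>n\<ge>N. \<epsilon> \<le> padic_abs p (Y n)" by blast
  then obtain N where N: "\<forall>m\<ge>N. \<forall>n\<ge>N. padic_abs p (Y m - Y n) < \<epsilon>"
    using assms(1) unfolding padic_cauchy_def by blast
  obtain m where m: "m \<ge> N" "\<epsilon> \<le> padic_abs p (Y m)" using \<epsilon>(2) by blast
  have "padic_abs p (Y n) = padic_abs p (Y m)" if "n \<ge> N" for n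
    using padic_abs_add_eq[of "Y n - Y m" "Y m"] N m that by force
  thus thesis using that[of "padic_abs p (Y m)"] \<epsilon>(1) m(2) by (auto simp: eventually_sequentially)
qed

lemma padic_cauchy_inverse:
  assumes Y: "padic_cauchy p Y" and C: "C > 0" "\<forall>\<^sub>F n in sequentially. padic_abs p (Y n) = C"
  shows "padic_cauchy p (\<lambda>n. inverse (Y n))"
  unfolding padic_cauchy_def
proof (intro allI impI)
  fix \<delta> :: real
  assume "\<delta> > 0"
  with C(1) obtain N1 where N1: "\<forall>m\<ge>N1. \<forall>n\<ge>N1. padic_abs p (Y m - Y n) < \<delta> * C * C"
    using Y unfolding padic_cauchy_def by (meson mult_pos_pos)
  obtain N2 where N2: "\<forall>n\<ge>N2. padic_abs p (Y n) = C"
    using C(2) unfolding eventually_sequentially by blast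
  have "padic_abs p (inverse (Y m) - inverse (Y n)) < \<delta>" if "m \<ge> max N1 N2" "n \<ge> max N1 N2" for m n
  proof -
    have "Y m \<noteq> 0" "Y n \<noteq> 0" using N2 C(1) that by fastforce+
    hence "inverse (Y m) - inverse (Y n) = (Y n - Y m) * inverse (Y m) * inverse (Y n)"
      by (simp add: field_simps)
    hence "padic_abs p (inverse (Y m) - inverse (Y n)) = padic_abs p (Y n - Y m) * inverse C * inverse C"
      using N2 that by (simp add: padic_abs_mult padic_abs_inverse)
    also have "\<dots> < \<delta>" using N1 that C(1) by (simp add: field_simps)
    finally show ?thesis .
  qed
  thus "\<exists>N. \<forall>m\<ge>N. \<forall>n\<ge>N. padic_abs p (inverse (Y m) - inverse (Y n)) < \<delta>" by blast
qed

end

section \<open>Balanced digit expansions and Browkin's function\<close>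

lemma sum_power_int_nonpos_less:
  fixes x :: "'a :: linordered_field"
  assumes "x > 1"
  shows "(\<Sum>i\<in>{r..0}. x powi i) < x / (x - 1)"
proof -
  have "(\<Sum>i\<in>{r..0}. x powi i) = (\<Sum>i\<in>{r..0}. inverse x ^ nat (- i))"
    by (intro sum.cong) (simp_all add: power_int_def power_inverse)
  also have "\<dots> = (\<Sum>j\<in>(\<lambda>i. nat (- i)) ` {r..0}. inverse x ^ j)"
    by (subst sum.reindex) (auto simp: inj_on_def)
  also have "\<dots> < 1 / (1 - inverse x)"
    using assms by (intro geometric_sum_less) (auto simp: inverse_less_1_iff)
  also have "\<dots> = x / (x - 1)"
    using assms by (simp add: field_simps)
  finally show ?thesis .
qed

locale odd_padic = padic +
  assumes odd_p: "odd p"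
begin

lemma p_eq_2_half_plus_1: "int p = 2 * ((int p - 1) div 2) + 1"
  using odd_p by (auto elim: oddE)

lemma p_ge_3: "p \<ge> 3"
  using p_gt_1 odd_p by (auto elim!: oddE)

lemma balanced_residue_exists: "\<exists>e. \<bar>e\<bar> \<le> (int p - 1) div 2 \<and> int p dvd t - e"
proof (cases "t mod int p \<le> (int p - 1) div 2")
  case True
  thus ?thesis using p_gt_1 by (intro exI[of _ "t mod int p"]) simp
next
  case False
  have "t - (t mod int p - int p) = (t - t mod int p) + int p" by simp
  hence "int p dvd t - (t mod int p - int p)"
    using dvd_minus_mod[of "int p" t] by (metis dvd_add dvd_refl)
  moreover have "t mod int p < int p" using p_gt_1 by simp
  ultimately show ?thesis
    using False p_eq_2_half_plus_1 by (intro exI[of _ "t mod int p - int p"]) auto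
qed

lemma balanced_digit_exists:
  assumes "padic_abs p x \<le> 1"
  shows "\<exists>e. \<bar>e\<bar> \<le> (int p - 1) div 2 \<and> padic_abs p (x - of_int e) \<le> real p powi -1"
proof -
  obtain a b where b: "\<not> int p dvd b" and x: "x = of_int a / of_int b"
    using padic_integer_cases[OF assms] .
  have "coprime b (int p)"
    using b prime_elem_p by (meson coprime_commute prime_elem_imp_coprime)
  then obtain u v where uv: "u * b + v * int p = 1"
    using bezout_int[of b "int p"] by auto
  obtain e where e: "\<bar>e\<bar> \<le> (int p - 1) div 2" "int p dvd a * u - e"
    using balanced_residue_exists by blast
  have "a - e * b = a * (u * b + v * int p) - e * b" using uv by simp
  also have "\<dots> = (a * u - e) * b + a * v * int p" by (simp add: algebra_simps)
  finally have "int p ^ 1 dvd a - e * b" using e(2) by simp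
  hence "padic_abs p (of_int (a - e * b)) \<le> real p powi (- int 1)"
    using padic_abs_of_int_le_p_power_iff by blast
  moreover have "x - of_int e = of_int (a - e * b) * inverse (of_int b)"
    using x b by (cases "b = 0") (auto simp: field_simps)
  ultimately have "padic_abs p (x - of_int e) \<le> real p powi -1"
    using b padic_abs_of_int_eq_1_iff[of b] by (simp add: padic_abs_mult padic_abs_inverse)
  thus ?thesis using e(1) by blast
qed

definition seq_digit :: "(nat \<Rightarrow> rat) \<Rightarrow> int" where
  "seq_digit S = (SOME e. \<bar>e\<bar> \<le> (int p - 1) div 2 \<and>
     (\<forall>\<^sub>F n in sequentially. padic_abs p (S n - of_int e) \<le> real p powi -1))"

lemma seq_digit:
  assumes "padic_cauchy p S" "\<forall>\<^sub>F n in sequentially. padic_abs p (S n) \<le> 1"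
  shows "\<bar>seq_digit S\<bar> \<le> (int p - 1) div 2"
    and "\<forall>\<^sub>F n in sequentially. padic_abs p (S n - of_int (seq_digit S)) \<le> real p powi -1"
proof -
  have "real p powi -1 > 0" using real_p_gt_1 by simp
  then obtain N1 where N1: "\<forall>m\<ge>N1. \<forall>n\<ge>N1. padic_abs p (S m - S n) < real p powi -1"
    using assms(1) unfolding padic_cauchy_def by blast
  obtain N2 where N2: "\<forall>n\<ge>N2. padic_abs p (S n) \<le> 1"
    using assms(2) unfolding eventually_sequentially by blast
  define N where "N = max N1 N2"
  have N: "\<forall>m\<ge>N. \<forall>n\<ge>N. padic_abs p (S m - S n) < real p powi -1"
    "\<forall>n\<ge>N. padic_abs p (S n) \<le> 1"
    using N1 N2 unfolding N_def by auto
  obtain e where e: "\<bar>e\<bar> \<le> (int p - 1) div 2" "padic_abs p (S N - of_int e) \<le> real p powi -1"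
    using balanced_digit_exists N(2) by blast
  have "padic_abs p (S n - of_int e) \<le> real p powi -1" if "n \<ge> N" for n
    using padic_abs_diff_trans_le[of "S n" "S N"] N(1) that e(2) by (simp add: less_imp_le)
  hence "\<exists>e. \<bar>e\<bar> \<le> (int p - 1) div 2 \<and>
      (\<forall>\<^sub>F n in sequentially. padic_abs p (S n - of_int e) \<le> real p powi -1)"
    using e(1) by (auto simp: eventually_sequentially)
  from someI_ex[OF this] show "\<bar>seq_digit S\<bar> \<le> (int p - 1) div 2"
    and "\<forall>\<^sub>F n in sequentially. padic_abs p (S n - of_int (seq_digit S)) \<le> real p powi -1"
    unfolding seq_digit_def by blast+
qed

fun digit_tail :: "(nat \<Rightarrow> rat) \<Rightarrow> nat \<Rightarrow> nat \<Rightarrow> rat" where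
  "digit_tail S 0 = S"
| "digit_tail S (Suc k) =
     (\<lambda>n. (digit_tail S k n - of_int (seq_digit (digit_tail S k))) / of_nat p)"

lemma digit_tail_cauchy_bounded:
  assumes "padic_cauchy p S" "\<forall>\<^sub>F n in sequentially. padic_abs p (S n) \<le> 1"
  shows "padic_cauchy p (digit_tail S k) \<and>
         (\<forall>\<^sub>F n in sequentially. padic_abs p (digit_tail S k n) \<le> 1)"
proof (induction k)
  case (Suc k)
  let ?W = "digit_tail S k" and ?e = "of_int (seq_digit (digit_tail S k)) :: rat"
  have "digit_tail S (Suc k) = (\<lambda>n. inverse (of_nat p) * ?W n + (- ?e / of_nat p))"
    by (simp add: divide_inverse algebra_simps)
  hence "padic_cauchy p (digit_tail S (Suc k))"
    using padic_cauchy_affine Suc by metis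
  moreover have "\<forall>\<^sub>F n in sequentially. padic_abs p (?W n - ?e) \<le> real p powi -1"
    using seq_digit(2) Suc by blast
  hence "\<forall>\<^sub>F n in sequentially. padic_abs p (digit_tail S (Suc k) n) \<le> 1"
  proof eventually_elim
    case (elim n)
    thus ?case using real_p_gt_1
      by (simp add: padic_abs_divide_p power_int_minus field_simps)
  qed
  ultimately show ?case by blast
qed (use assms in simp)

lemma digit_tail_expansion:
  "S n = (\<Sum>j<K. of_int (seq_digit (digit_tail S j)) * of_nat p ^ j) + of_nat p ^ K * digit_tail S K n"
proof (induction K)
  case (Suc K)
  thus ?case using p_gt_1 by (simp add: field_simps)
qed simp

lemma digit_partial_sums_tendsto:
  assumes "padic_cauchy p S" "\<forall>\<^sub>F n in sequentially. padic_abs p (S n) \<le> 1"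
  shows "(\<lambda>n. padic_abs p (S n - (\<Sum>j<n + d. of_int (seq_digit (digit_tail S j)) * of_nat p ^ j)))
           \<longlonglongrightarrow> 0"
proof (rule tendsto_0_if_eventually_le_p_powers)
  fix K
  let ?e = "\<lambda>j. of_int (seq_digit (digit_tail S j)) :: rat"
  have pK: "real p powi - int K \<ge> 0" using real_p_gt_1 by simp
  have "\<forall>\<^sub>F n in sequentially. padic_abs p (digit_tail S K n) \<le> 1 \<and> n \<ge> K"
    using eventually_conj[OF conjunct2[OF digit_tail_cauchy_bounded[OF assms]] eventually_ge_at_top] .
  thus "\<forall>\<^sub>F n in sequentially.
          padic_abs p (S n - (\<Sum>j<n + d. ?e j * of_nat p ^ j)) \<le> real p powi - int K"
  proof eventually_elim
    case (elim n)
    have "(\<Sum>j<n + d. ?e j * of_nat p ^ j) =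
          (\<Sum>j<K. ?e j * of_nat p ^ j) + (\<Sum>j\<in>{K..<n + d}. ?e j * of_nat p ^ j)"
      using sum.atLeastLessThan_concat[of 0 K "n + d" "\<lambda>j. ?e j * of_nat p ^ j"] elim
      by (simp add: atLeast0LessThan)
    hence eq: "S n - (\<Sum>j<n + d. ?e j * of_nat p ^ j) =
           of_nat p ^ K * digit_tail S K n + - (\<Sum>j\<in>{K..<n + d}. ?e j * of_nat p ^ j)"
      using digit_tail_expansion[of S n K] by simp
    moreover have "padic_abs p (of_nat p ^ K * digit_tail S K n) \<le> real p powi - int K"
      using elim pK by (simp add: padic_abs_mult padic_abs_p_power mult_left_le)
    moreover have "padic_abs p (\<Sum>j\<in>{K..<n + d}. ?e j * of_nat p ^ j) \<le> real p powi - int K"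
    proof (rule padic_abs_sum_le)
      fix j
      assume j: "j \<in> {K..<n + d}"
      have "padic_abs p (?e j * of_nat p ^ j) \<le> real p powi - int j"
        using padic_abs_of_int_le_1 real_p_gt_1
        by (simp add: padic_abs_mult padic_abs_p_power mult_left_le_one_le)
      also have "\<dots> \<le> real p powi - int K"
        using j power_int_le_power_int_iff[OF real_p_gt_1] by simp
      finally show "padic_abs p (?e j * of_nat p ^ j) \<le> real p powi - int K" .
    qed (rule pK)
    ultimately show ?case
      unfolding eq by (intro order_trans[OF padic_abs_add_le]) simp
  qed
qed (rule padic_abs_nonneg)

end

definition is_browkin_s :: "nat \<Rightarrow> (nat \<Rightarrow> rat) \<Rightarrow> rat \<Rightarrow> bool" where
  "is_browkin_s p Y c \<longleftrightarrow> (\<exists>(a::int \<Rightarrow> int) (r::int).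
      (\<forall>i. \<bar>a i\<bar> \<le> (int p - 1) div 2) \<and> (\<forall>i<r. a i = 0) \<and>
      padic_eq p Y (\<lambda>n. \<Sum>i\<in>{r..int n}. of_int (a i) * (of_nat p) powi i) \<and>
      c = (\<Sum>i\<in>{r..0}. of_int (a i) * (of_nat p) powi i))"

lemma browkin_s_eq_The: "browkin_s p Y = (THE c. is_browkin_s p Y c)"
  unfolding browkin_s_def is_browkin_s_def ..

context odd_padic
begin

lemma is_browkin_s_exists:
  assumes Y: "padic_cauchy p Y"
  shows "\<exists>c. is_browkin_s p Y c"
proof -
  obtain R where R: "\<forall>\<^sub>F n in sequentially. padic_abs p (Y n) \<le> real p ^ R"
    using padic_cauchy_eventually_bounded[OF Y] .
  define Z where "Z n = of_nat p ^ R * Y n" for n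
  have Z: "padic_cauchy p Z"
    using padic_cauchy_affine[OF Y, of "of_nat p ^ R" 0] unfolding Z_def by simp
  have "\<forall>\<^sub>F n in sequentially. padic_abs p (Z n) \<le> 1"
    using R
  proof eventually_elim
    case (elim n)
    thus ?case using real_p_gt_1
      by (simp add: Z_def padic_abs_mult padic_abs_p_power power_int_minus field_simps)
  qed
  note digits = digit_tail_cauchy_bounded[OF Z this] digit_partial_sums_tendsto[OF Z this]
  define e where "e j = seq_digit (digit_tail Z j)" for j
  define T where "T m = (\<Sum>j<m. of_int (e j) * of_nat p ^ j :: rat)" for m
  define a where "a i = (if i < - int R then 0 else e (nat (i + int R)))" for i
  have a_bound: "\<bar>a i\<bar> \<le> (int p - 1) div 2" for i
    using seq_digit(1) digits(1) p_gt_1 unfolding a_def e_def by auto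
  \<comment> \<open>The digits of \<open>Y\<close> are those of \<open>Z\<close>, shifted by \<open>R\<close> places.\<close>
  have sum_eq: "(\<Sum>i\<in>{- int R..int n}. of_int (a i) * of_nat p powi i) =
      of_nat p powi - int R * T (n + (R + 1))" for n
  proof -
    have "(\<Sum>i\<in>{- int R..int n}. of_int (a i) * (of_nat p :: rat) powi i) =
        (\<Sum>j<n + (R + 1). of_int (a (int j - int R)) * of_nat p powi (int j - int R))"
      by (rule sum.reindex_bij_witness[where i = "\<lambda>j. int j - int R" and j = "\<lambda>i. nat (i + int R)"])
        auto
    also have "\<dots> = (\<Sum>j<n + (R + 1). of_nat p powi - int R * (of_int (e j) * of_nat p ^ j))"
      using p_gt_1 by (intro sum.cong) (simp_all add: a_def power_int_diff power_int_minus field_simps)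
    finally show ?thesis by (simp only: T_def sum_distrib_left)
  qed
  have "padic_abs p (Y n - of_nat p powi - int R * T (n + (R + 1))) =
      real p ^ R * padic_abs p (Z n - T (n + (R + 1)))" for n
  proof -
    have "Y n - of_nat p powi - int R * T (n + (R + 1)) = of_nat p powi - int R * (Z n - T (n + (R + 1)))"
      using p_gt_1 by (simp add: Z_def power_int_minus field_simps)
    thus ?thesis by (simp add: padic_abs_mult padic_abs_p_power_int)
  qed
  hence "padic_eq p Y (\<lambda>n. \<Sum>i\<in>{- int R..int n}. of_int (a i) * of_nat p powi i)"
    using tendsto_mult_right_zero[OF digits(2)[of "R + 1"], of "real p ^ R"]
    unfolding padic_eq_def sum_eq T_def e_def by simp
  moreover have "\<forall>i < - int R. a i = 0" by (simp add: a_def)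
  ultimately show ?thesis unfolding is_browkin_s_def using a_bound by blast
qed

lemma small_p_fraction_eq_0:
  assumes "z * of_nat p ^ R \<in> \<int>" "\<bar>z\<bar> < of_nat p" "padic_abs p z \<le> real p powi -1"
  shows "z = 0"
proof (rule ccontr)
  assume z: "z \<noteq> 0"
  from assms(1) obtain m where m: "z * of_nat p ^ R = of_int m" by (elim Ints_cases) simp
  have "padic_abs p (of_int m) = padic_abs p z * real p powi - int R"
    by (simp flip: m add: padic_abs_mult padic_abs_p_power)
  also have "\<dots> \<le> real p powi -1 * real p powi - int R"
    using assms(3) real_p_gt_1 by (intro mult_right_mono) simp_all
  also have "\<dots> = real p powi - int (R + 1)"
    using real_p_gt_1 power_int_add[of "real p" "-1" "- int R"] by (simp add: add.commute)
  finally have "int p ^ (R + 1) dvd m" by (simp only: padic_abs_of_int_le_p_power_iff)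
  moreover have "m \<noteq> 0" using z m p_gt_1 by auto
  ultimately have "int p ^ (R + 1) \<le> \<bar>m\<bar>" using dvd_imp_le_int[of m "int p ^ (R + 1)"] by simp
  hence "of_int (int p ^ (R + 1)) \<le> (of_int \<bar>m\<bar> :: rat)" by (simp only: of_int_le_iff)
  hence "of_nat p * of_nat p ^ R \<le> \<bar>z\<bar> * (of_nat p ^ R :: rat)"
    by (simp flip: m add: abs_mult)
  thus False using assms(2) p_gt_1 by (simp add: mult_le_cancel_right)
qed

lemma is_browkin_s_p_fraction:
  assumes "is_browkin_s p Y c"
  obtains R where "c * of_nat p ^ R \<in> \<int>"
proof -
  obtain a r where c: "c = (\<Sum>i\<in>{r..0}. of_int (a i) * (of_nat p :: rat) powi i)"
    using assms unfolding is_browkin_s_def by blast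
  have "c * of_nat p ^ nat (- r) = (\<Sum>i\<in>{r..0}. of_int (a i) * of_nat p powi (i - r))"
    unfolding c sum_distrib_right
  proof (intro sum.cong refl)
    fix i
    assume "i \<in> {r..0}"
    hence "(of_nat p :: rat) ^ nat (- r) = of_nat p powi (- r)" by (simp add: power_int_nonneg_exp)
    moreover have "(of_nat p :: rat) powi (i - r) = of_nat p powi i / of_nat p powi r"
      using p_gt_1 by (intro power_int_diff) simp
    ultimately show "of_int (a i) * of_nat p powi i * of_nat p ^ nat (- r) =
        (of_int (a i) * of_nat p powi (i - r) :: rat)"
      by (simp add: power_int_minus divide_inverse)
  qed
  also have "\<dots> \<in> \<int>"
    by (intro Ints_sum Ints_mult) (auto simp: power_int_nonneg_exp)
  finally show thesis using that by blast
qed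

lemma is_browkin_s_abs_less:
  assumes "is_browkin_s p Y c"
  shows "\<bar>c\<bar> < of_nat p / 2"
proof -
  obtain a r where a: "\<forall>i. \<bar>a i\<bar> \<le> (int p - 1) div 2"
    and c: "c = (\<Sum>i\<in>{r..0}. of_int (a i) * (of_nat p :: rat) powi i)"
    using assms unfolding is_browkin_s_def by blast
  define h where "h = (of_nat p - 1) / (2 :: rat)"
  have "of_int ((int p - 1) div 2) = h"
    using arg_cong[OF p_eq_2_half_plus_1, of rat_of_int] unfolding h_def by simp
  hence a_le: "\<bar>of_int (a i)\<bar> \<le> h" for i
    using a by (metis of_int_abs of_int_le_iff)
  have p: "(of_nat p :: rat) > 1" using p_gt_1 by simp
  have "\<bar>c\<bar> \<le> (\<Sum>i\<in>{r..0}. \<bar>of_int (a i)\<bar> * (of_nat p :: rat) powi i)"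
    unfolding c using p by (intro order_trans[OF sum_abs]) (simp add: abs_mult)
  also have "\<dots> \<le> (\<Sum>i\<in>{r..0}. h * (of_nat p :: rat) powi i)"
    using a_le p by (intro sum_mono mult_right_mono) simp_all
  also have "\<dots> < h * (of_nat p / (of_nat p - 1))"
    unfolding sum_distrib_left[symmetric] using p sum_power_int_nonpos_less[OF p]
    by (intro mult_strict_left_mono) (simp_all add: h_def)
  also have "\<dots> = of_nat p / 2"
    using p by (simp add: h_def field_simps)
  finally show ?thesis .
qed

lemma is_browkin_s_eventually_close:
  assumes "is_browkin_s p Y c"
  shows "\<forall>\<^sub>F n in sequentially. padic_abs p (Y n - c) \<le> real p powi -1"
proof -
  obtain a r where conv: "padic_eq p Y (\<lambda>n. \<Sum>i\<in>{r..int n}. of_int (a i) * (of_nat p) powi i)"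
    and c: "c = (\<Sum>i\<in>{r..0}. of_int (a i) * (of_nat p :: rat) powi i)"
    using assms unfolding is_browkin_s_def by blast
  let ?T = "\<lambda>n. \<Sum>i\<in>{r..int n}. of_int (a i) * (of_nat p :: rat) powi i"
  have "real p powi -1 > 0" using real_p_gt_1 by simp
  hence Y_close: "\<forall>\<^sub>F n in sequentially. padic_abs p (Y n - ?T n) < real p powi -1"
    using conv unfolding padic_eq_def by (intro order_tendstoD(2))
  have T_close: "padic_abs p (?T n - c) \<le> real p powi -1" for n
  proof -
    have "?T n - c = (\<Sum>i\<in>{r..int n} - {r..0}. of_int (a i) * (of_nat p :: rat) powi i)"
      unfolding c by (subst sum_diff) auto
    also have "padic_abs p \<dots> \<le> real p powi -1"
    proof (rule padic_abs_sum_le)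
      fix i
      assume "i \<in> {r..int n} - {r..0}"
      hence "- i \<le> -1" by auto
      hence "real p powi - i \<le> real p powi -1"
        using power_int_le_power_int_iff[OF real_p_gt_1] by blast
      moreover have "padic_abs p (of_int (a i) * of_nat p powi i) \<le> real p powi - i"
        using padic_abs_of_int_le_1[of "a i"] real_p_gt_1
        by (simp add: padic_abs_mult padic_abs_p_power_int mult_left_le_one_le)
      ultimately show "padic_abs p (of_int (a i) * of_nat p powi i) \<le> real p powi -1"
        by linarith
    qed (use real_p_gt_1 in simp)
    finally show ?thesis .
  qed
  from Y_close show ?thesis
    by eventually_elim (use padic_abs_diff_trans_le T_close less_imp_le in blast)
qed

lemma is_browkin_s_unique:
  assumes "is_browkin_s p Y c" "is_browkin_s p Y c'"
  shows "c = c'"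
proof -
  obtain R where R: "c * of_nat p ^ R \<in> \<int>"
    using is_browkin_s_p_fraction[OF assms(1)] .
  obtain R' where R': "c' * of_nat p ^ R' \<in> \<int>"
    using is_browkin_s_p_fraction[OF assms(2)] .
  have "(c - c') * of_nat p ^ (R + R') = c * of_nat p ^ R * of_nat p ^ R' - c' * of_nat p ^ R' * of_nat p ^ R"
    by (simp add: power_add algebra_simps)
  also have "\<dots> \<in> \<int>" by (intro Ints_diff Ints_mult[OF R] Ints_mult[OF R']) simp_all
  finally have "(c - c') * of_nat p ^ (R + R') \<in> \<int>" .
  moreover have "\<bar>c - c'\<bar> < of_nat p"
    using is_browkin_s_abs_less[OF assms(1)] is_browkin_s_abs_less[OF assms(2)] by linarith
  moreover obtain n where "padic_abs p (Y n - c) \<le> real p powi -1" "padic_abs p (Y n - c') \<le> real p powi -1"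
    using eventually_conj[OF assms[THEN is_browkin_s_eventually_close]] eventually_sequentially by auto
  hence "padic_abs p (c - c') \<le> real p powi -1"
    using padic_abs_diff_trans_le[of c "Y n" _ c'] padic_abs_minus_commute[of c "Y n"] by simp
  ultimately have "c - c' = 0" by (rule small_p_fraction_eq_0)
  thus ?thesis by simp
qed

lemma is_browkin_s_browkin_s:
  assumes "padic_cauchy p Y"
  shows "is_browkin_s p Y (browkin_s p Y)"
proof -
  have "\<exists>!c. is_browkin_s p Y c" using is_browkin_s_exists[OF assms] is_browkin_s_unique by blast
  thus ?thesis unfolding browkin_s_eq_The by (rule theI')
qed

lemma browkin_s_abs_less: "padic_cauchy p Y \<Longrightarrow> \<bar>browkin_s p Y\<bar> < of_nat p / 2"
  using is_browkin_s_abs_less is_browkin_s_browkin_s by blast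

lemma browkin_s_eventually_close:
  "padic_cauchy p Y \<Longrightarrow> \<forall>\<^sub>F n in sequentially. padic_abs p (Y n - browkin_s p Y) \<le> real p powi -1"
  using is_browkin_s_eventually_close is_browkin_s_browkin_s by blast

lemma browkin_s_eq_0_or_padic_abs_ge_1:
  assumes Y: "padic_cauchy p Y"
  shows "browkin_s p Y = 0 \<or> padic_abs p (browkin_s p Y) \<ge> 1"
proof (rule disjCI)
  let ?s = "browkin_s p Y"
  assume "\<not> padic_abs p ?s \<ge> 1"
  hence "padic_abs p ?s \<le> real p powi -1"
    using padic_abs_less_p_power_int_iff[of ?s 0] padic_abs_le_p_power_int_iff[of ?s 1] by fastforce
  moreover obtain R where "?s * of_nat p ^ R \<in> \<int>"
    using is_browkin_s_p_fraction[OF is_browkin_s_browkin_s[OF Y]] .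
  moreover have "\<bar>?s\<bar> < of_nat p" using browkin_s_abs_less[OF Y] by linarith
  ultimately show "?s = 0" using small_p_fraction_eq_0 by blast
qed

lemma padic_abs_browkin_s:
  assumes Y: "padic_cauchy p Y" and C: "real p powi -1 < C" "\<forall>\<^sub>F n in sequentially. padic_abs p (Y n) = C"
  shows "padic_abs p (browkin_s p Y) = C"
proof -
  let ?s = "browkin_s p Y"
  obtain n where n: "padic_abs p (Y n - ?s) \<le> real p powi -1" "padic_abs p (Y n) = C"
    using eventually_conj[OF browkin_s_eventually_close[OF Y] C(2)] eventually_sequentially by auto
  have "padic_abs p (Y n + - (Y n - ?s)) = padic_abs p (Y n)"
    using n C(1) padic_abs_minus_commute[of ?s "Y n"] by (intro padic_abs_add_eq) simp
  thus ?thesis using n by simp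
qed

lemma inverse_diff_browkin_s:
  assumes Y: "padic_cauchy p Y" and "\<not> padic_eq p Y (\<lambda>_. browkin_s p Y)"
  shows "padic_cauchy p (\<lambda>n. inverse (Y n - browkin_s p Y))"
    and "\<exists>C \<ge> real p. \<forall>\<^sub>F n in sequentially. padic_abs p (inverse (Y n - browkin_s p Y)) = C"
proof -
  let ?D = "\<lambda>n. Y n - browkin_s p Y"
  have D: "padic_cauchy p ?D" using padic_cauchy_affine[OF Y, of 1 "- browkin_s p Y"] by simp
  obtain C where C: "C > 0" "\<forall>\<^sub>F n in sequentially. padic_abs p (?D n) = C"
    using padic_cauchy_not_null_eventually_const[OF D] assms(2) unfolding padic_eq_def by blast
  show "padic_cauchy p (\<lambda>n. inverse (?D n))" using padic_cauchy_inverse[OF D C] .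
  obtain n where "padic_abs p (?D n) \<le> real p powi -1" "padic_abs p (?D n) = C"
    using eventually_conj[OF browkin_s_eventually_close[OF Y] C(2)] eventually_sequentially by auto
  hence "inverse (inverse (real p)) \<le> inverse C"
    using C(1) by (intro le_imp_inverse_le) (simp_all add: power_int_minus)
  hence "real p \<le> inverse C" by simp
  moreover have "\<forall>\<^sub>F n in sequentially. padic_abs p (inverse (?D n)) = inverse C"
    using C(2) by eventually_elim (simp add: padic_abs_inverse)
  ultimately show "\<exists>C \<ge> real p. \<forall>\<^sub>F n in sequentially. padic_abs p (inverse (?D n)) = C" by blast
qed

end

section \<open>Growth of the convergents\<close>

lemma ratio_recurrence_tendsto_0:
  fixes r :: "nat \<Rightarrow> real"
  assumes nonneg: "\<And>k. r k \<ge> 0" and rec: "\<And>k. k \<ge> k1 \<Longrightarrow> r (k + 2) \<le> r (k + 1) / 2 + r k / 9"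
  shows "r \<longlonglongrightarrow> 0"
proof -
  \<comment> \<open>\<open>U\<close> contracts by the factor \<open>3/4\<close> because \<open>1/9 \<le> 3/16\<close>.\<close>
  define U where "U k = r (Suc k) + r k / 4" for k
  have U_step: "U (Suc k) \<le> 3 / 4 * U k" if "k \<ge> k1" for k
    using rec[OF that] nonneg[of k] by (simp add: U_def)
  have U_le: "U (k1 + j) \<le> (3 / 4) ^ j * U k1" for j
  proof (induction j)
    case (Suc j)
    have "U (k1 + Suc j) \<le> 3 / 4 * U (k1 + j)" using U_step[of "k1 + j"] by simp
    also have "\<dots> \<le> 3 / 4 * ((3 / 4) ^ j * U k1)" using Suc by simp
    finally show ?case by simp
  qed simp
  have "(\<lambda>j. r (Suc (k1 + j))) \<longlonglongrightarrow> 0"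
  proof (rule tendsto_sandwich[of "\<lambda>_. 0" _ _ "\<lambda>j. (3 / 4) ^ j * U k1"])
    have "r (Suc (k1 + j)) \<le> U (k1 + j)" for j using nonneg[of "k1 + j"] by (simp add: U_def)
    thus "\<forall>\<^sub>F j in sequentially. r (Suc (k1 + j)) \<le> (3 / 4) ^ j * U k1"
      using U_le order_trans by (intro always_eventually allI) blast
    show "(\<lambda>j. (3 / 4) ^ j * U k1) \<longlonglongrightarrow> 0"
      by (intro tendsto_mult_left_zero LIMSEQ_power_zero) simp
  qed (simp_all add: nonneg)
  thus ?thesis using LIMSEQ_offset[of r "Suc k1"] by (simp add: add.commute)
qed

lemma quotient_ratio_recurrence:
  fixes P Q :: "nat \<Rightarrow> real" and q :: real
  assumes q: "q \<ge> 3"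
    and P: "P k > 0" "q * P k \<le> P (k + 1)" "q * P (k + 1) \<le> P (k + 2)"
    and Q: "Q k \<ge> 0" "Q (k + 1) \<ge> 0" "Q (k + 2) \<le> q / 2 * Q (k + 1) + Q k"
  shows "Q (k + 2) / P (k + 2) \<le> Q (k + 1) / P (k + 1) / 2 + Q k / P k / 9"
proof -
  have P1: "P (k + 1) > 0" using P(1,2) q mult_pos_pos[of q "P k"] by linarith
  have P2: "P (k + 2) > 0" using P1 P(3) q mult_pos_pos[of q "P (k + 1)"] by linarith
  have "9 * P k \<le> q * q * P k"
    using mult_mono[OF q q] q P(1) by (intro mult_right_mono) simp_all
  also have "\<dots> \<le> q * P (k + 1)" using P(2) q by (simp add: mult.assoc)
  also have "\<dots> \<le> P (k + 2)" using P(3) .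
  finally have P9: "9 * P k \<le> P (k + 2)" .
  have "Q (k + 2) / P (k + 2) \<le> (q / 2 * Q (k + 1) + Q k) / P (k + 2)"
    using Q(3) P2 by (simp add: divide_right_mono)
  also have "\<dots> = q / 2 * (Q (k + 1) / P (k + 2)) + Q k / P (k + 2)"
    by (simp add: add_divide_distrib)
  also have "Q (k + 1) / P (k + 2) \<le> Q (k + 1) / (q * P (k + 1))"
    using P(3) P1 P2 q Q(2) by (intro divide_left_mono) (auto intro!: mult_pos_pos)
  also have "Q k / P (k + 2) \<le> Q k / (9 * P k)"
    using P9 P(1) P2 Q(1) by (intro divide_left_mono) (auto intro!: mult_pos_pos)
  finally show ?thesis using q by (simp add: field_simps)
qed

context padic
begin

lemma padic_abs_recurrence_growth:
  fixes x b :: "nat \<Rightarrow> rat"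
  assumes rec: "\<And>k. x (k + 2) = b k * x (k + 1) + x k"
    and b: "\<And>k. k \<ge> m \<Longrightarrow> padic_abs p (b k) \<ge> real p"
    and start: "padic_abs p (x m) < padic_abs p (x (m + 1))"
  shows "k \<ge> m \<Longrightarrow> padic_abs p (x k) < padic_abs p (x (k + 1))"
    and "k \<ge> m \<Longrightarrow> real p * padic_abs p (x (k + 1)) \<le> padic_abs p (x (k + 2))"
proof -
  have growth_step: "real p * padic_abs p (x (k + 1)) \<le> padic_abs p (x (k + 2))"
    if "k \<ge> m" "padic_abs p (x k) < padic_abs p (x (k + 1))" for k
  proof -
    have "1 * padic_abs p (x (k + 1)) \<le> real p * padic_abs p (x (k + 1))"
      using real_p_gt_1 padic_abs_nonneg by (intro mult_right_mono) simp_all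
    also have "\<dots> \<le> padic_abs p (b k * x (k + 1))"
      using b[OF that(1)] padic_abs_nonneg by (simp add: padic_abs_mult mult_right_mono)
    finally have "padic_abs p (x (k + 2)) = padic_abs p (b k * x (k + 1))"
      unfolding rec using that(2) by (intro padic_abs_add_eq) simp
    thus ?thesis using b[OF that(1)] padic_abs_nonneg by (simp add: padic_abs_mult mult_right_mono)
  qed
  show inc: "padic_abs p (x k) < padic_abs p (x (k + 1))" if "k \<ge> m" for k
    using that
  proof (induction k rule: dec_induct)
    case (step k)
    have "0 < padic_abs p (x (k + 1))" using step.IH padic_abs_nonneg[of "x k"] by linarith
    hence "1 * padic_abs p (x (k + 1)) < real p * padic_abs p (x (k + 1))"
      using real_p_gt_1 by (intro mult_strict_right_mono) simp_all
    also have "\<dots> \<le> padic_abs p (x (k + 2))" using step.hyps(1) step.IH by (rule growth_step)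
    finally show ?case by simp
  qed (rule start)
  show "k \<ge> m \<Longrightarrow> real p * padic_abs p (x (k + 1)) \<le> padic_abs p (x (k + 2))"
    using growth_step inc by blast
qed

end

context odd_padic
begin

lemma eventually_abs_less_padic_abs_of_recurrence:
  fixes x b :: "nat \<Rightarrow> rat"
  assumes rec: "\<And>k. x (k + 2) = b k * x (k + 1) + x k"
    and b_abs: "\<And>k. \<bar>b k\<bar> < of_nat p / 2"
    and b_padic: "\<And>k. k \<ge> m \<Longrightarrow> padic_abs p (b k) \<ge> real p"
    and start: "padic_abs p (x m) < padic_abs p (x (m + 1))"
  shows "\<forall>\<^sub>F n in sequentially. real_of_rat \<bar>x n\<bar> < padic_abs p (x n)"
proof -
  define P where "P k = padic_abs p (x k)" for k
  define Q where "Q k = real_of_rat \<bar>x k\<bar>" for k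
  note growth = padic_abs_recurrence_growth[of x b m, OF rec b_padic start]
  have P_pos: "P k > 0" if "k \<ge> m + 1" for k
  proof -
    have "m \<le> k - 1" using that by simp
    thus ?thesis using growth(1)[of "k - 1"] that padic_abs_nonneg[of "x (k - 1)"] by (simp add: P_def)
  qed
  have Q_rec: "Q (k + 2) \<le> real p / 2 * Q (k + 1) + Q k" for k
  proof -
    have "\<bar>x (k + 2)\<bar> \<le> \<bar>b k\<bar> * \<bar>x (k + 1)\<bar> + \<bar>x k\<bar>"
      unfolding rec abs_mult[symmetric] by (rule abs_triangle_ineq)
    also have "\<dots> \<le> of_nat p / 2 * \<bar>x (k + 1)\<bar> + \<bar>x k\<bar>"
      using b_abs[of k] by (intro add_right_mono mult_right_mono) simp_all
    finally have "\<bar>x (k + 2)\<bar> \<le> of_nat p / 2 * \<bar>x (k + 1)\<bar> + \<bar>x k\<bar>" .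
    hence "real_of_rat \<bar>x (k + 2)\<bar> \<le> real_of_rat (of_nat p / 2 * \<bar>x (k + 1)\<bar> + \<bar>x k\<bar>)"
      by (simp only: of_rat_less_eq)
    thus ?thesis unfolding Q_def by (simp add: of_rat_add of_rat_mult of_rat_divide)
  qed
  have "(\<lambda>k. Q k / P k) \<longlonglongrightarrow> 0"
  proof (rule ratio_recurrence_tendsto_0)
    show "Q k / P k \<ge> 0" for k unfolding P_def Q_def by (simp add: padic_abs_nonneg)
    show "Q (k + 2) / P (k + 2) \<le> Q (k + 1) / P (k + 1) / 2 + Q k / P k / 9" if "k \<ge> m + 1" for k
      using p_ge_3 P_pos[OF that] growth(2)[of "k - 1"] growth(2)[of k] that Q_rec[of k]
      unfolding P_def Q_def
      by (intro quotient_ratio_recurrence) (simp_all add: Suc_diff_le numeral_2_eq_2)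
  qed
  hence "\<forall>\<^sub>F n in sequentially. Q n / P n < 1" by (rule order_tendstoD) simp
  moreover have "\<forall>\<^sub>F n in sequentially. P n > 0"
    using P_pos unfolding eventually_sequentially by blast
  ultimately show ?thesis
    by eventually_elim (simp add: P_def Q_def divide_less_eq)
qed

end

locale browkin_expansion = odd_padic +
  fixes X :: "nat \<Rightarrow> rat"
  assumes cauchy_X: "padic_cauchy p X" and infinite_X: "browkin_infinite p X"
begin

lemma browkin_alpha_cauchy_padic_abs:
  "padic_cauchy p (browkin_alpha p X i) \<and>
   (i \<ge> 1 \<longrightarrow> (\<exists>C \<ge> real p. \<forall>\<^sub>F n in sequentially. padic_abs p (browkin_alpha p X i n) = C))"
proof (induction i)
  case (Suc i)
  have "\<not> padic_eq p (browkin_alpha p X i) (\<lambda>_. browkin_s p (browkin_alpha p X i))"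
    using infinite_X unfolding browkin_infinite_def browkin_b_def by blast
  thus ?case using inverse_diff_browkin_s Suc by simp
qed (simp add: cauchy_X)

lemma browkin_b_abs_less: "\<bar>browkin_b p X i\<bar> < of_nat p / 2"
  unfolding browkin_b_def using browkin_s_abs_less browkin_alpha_cauchy_padic_abs by blast

lemma browkin_b_padic_abs_ge:
  assumes "i \<ge> 1"
  shows "padic_abs p (browkin_b p X i) \<ge> real p"
proof -
  obtain C where C: "C \<ge> real p" "\<forall>\<^sub>F n in sequentially. padic_abs p (browkin_alpha p X i n) = C"
    using browkin_alpha_cauchy_padic_abs assms by blast
  have "real p powi -1 < 1"
    using real_p_gt_1 by (simp add: power_int_minus inverse_less_1_iff)
  hence "padic_abs p (browkin_s p (browkin_alpha p X i)) = C"
    using padic_abs_browkin_s browkin_alpha_cauchy_padic_abs C real_p_gt_1 by fastforce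
  thus ?thesis using C(1) by (simp add: browkin_b_def)
qed

lemma padic_abs_cfA_2_less_3:
  "padic_abs p (cfA (browkin_b p X) 2) < padic_abs p (cfA (browkin_b p X) 3)"
proof -
  let ?b = "browkin_b p X"
  have cfA: "cfA ?b 2 = ?b 0" "cfA ?b 3 = ?b 1 * ?b 0 + 1"
    by (simp_all add: numeral_2_eq_2 numeral_3_eq_3)
  show ?thesis
  proof (cases "?b 0 = 0")
    case False
    hence b0: "padic_abs p (?b 0) \<ge> 1"
      using browkin_s_eq_0_or_padic_abs_ge_1[OF cauchy_X] by (simp add: browkin_b_def)
    have "1 * padic_abs p (?b 0) < padic_abs p (?b 1) * padic_abs p (?b 0)"
      using browkin_b_padic_abs_ge[of 1] real_p_gt_1 b0 by (intro mult_strict_right_mono) simp_all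
    hence lt: "padic_abs p (?b 0) < padic_abs p (?b 1 * ?b 0)" by (simp add: padic_abs_mult)
    hence "padic_abs p (?b 1 * ?b 0 + 1) = padic_abs p (?b 1 * ?b 0)"
      using b0 by (intro padic_abs_add_eq) simp
    thus ?thesis using lt cfA by simp
  qed (simp add: cfA)
qed

end

theorem lemma2:
  fixes p :: nat and X :: "nat \<Rightarrow> rat"
  assumes "prime p" and "odd p"
    and "padic_cauchy p X"
    and "browkin_infinite p X"
  shows "\<exists>N. \<forall>n\<ge>N.
           real_of_rat \<bar>cfA (browkin_b p X) (n + 2)\<bar> < padic_abs p (cfA (browkin_b p X) (n + 2)) \<and>
           real_of_rat \<bar>cfB (browkin_b p X) (n + 2)\<bar> < padic_abs p (cfB (browkin_b p X) (n + 2))"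
proof -
  interpret browkin_expansion p X
    using assms by unfold_locales
  let ?b = "browkin_b p X"
  \<comment> \<open>The \<open>p\<close>-adic growth starts at \<open>(B\<^sub>-\<^sub>1, B\<^sub>0) = (0, 1)\<close>
    and at \<open>(A\<^sub>0, A\<^sub>1) = (b\<^sub>0, b\<^sub>1 b\<^sub>0 + 1)\<close>.\<close>
  have recA: "cfA ?b (k + 2) = ?b k * cfA ?b (k + 1) + cfA ?b k"
    and recB: "cfB ?b (k + 2) = ?b k * cfB ?b (k + 1) + cfB ?b k" for k
    by (simp_all add: numeral_2_eq_2)
  have "\<forall>\<^sub>F n in sequentially. real_of_rat \<bar>cfA ?b n\<bar> < padic_abs p (cfA ?b n)"
    using padic_abs_cfA_2_less_3
    by (intro eventually_abs_less_padic_abs_of_recurrence[where m = 2, OF recA browkin_b_abs_less])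
      (simp_all add: browkin_b_padic_abs_ge)
  moreover have "\<forall>\<^sub>F n in sequentially. real_of_rat \<bar>cfB ?b n\<bar> < padic_abs p (cfB ?b n)"
    by (intro eventually_abs_less_padic_abs_of_recurrence[where m = 1, OF recB browkin_b_abs_less])
      (simp_all add: browkin_b_padic_abs_ge numeral_2_eq_2)
  ultimately have "\<forall>\<^sub>F n in sequentially.
      real_of_rat \<bar>cfA ?b n\<bar> < padic_abs p (cfA ?b n) \<and> real_of_rat \<bar>cfB ?b n\<bar> < padic_abs p (cfB ?b n)"
    by (rule eventually_conj)
  hence "\<forall>\<^sub>F n in sequentially.
      real_of_rat \<bar>cfA ?b (n + 2)\<bar> < padic_abs p (cfA ?b (n + 2)) \<and>
      real_of_rat \<bar>cfB ?b (n + 2)\<bar> < padic_abs p (cfB ?b (n + 2))"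
    by (rule eventually_sequentially_seg[THEN iffD2])
  thus ?thesis unfolding eventually_sequentially .
qed

end
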